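(* Fix a noise variance $\sigma_W^2>0$ and let $\lambda_\gamma(0,1)$ be the Gittins index (defined in the context) of an arm with standard normal prior $N(0,1)$. Then \[ \lambda_\gamma(0,1)\le \sqrt{2\log\left(\frac{1}{1-\gamma}\right)}+o(1)\quad\text{as } \gamma\to1. \]
   Context: One-armed Gaussian bandit: the arm has unknown quality $\theta\sim N(\mu,\sigma^2)$ (the prior), and conditional on $\theta$ the rewards $R_0,R_1,R_2,\ldots$ are i.i.d. $N(\theta,\sigma_W^2)$, where $\sigma_W^2>0$ is a fixed noise variance. Let $\mathcal{H}_t$ be the $\sigma$-algebra generated by $R_0,\ldots,R_{t-1}$ ($\mathcal{H}_0$ trivial). For a discount factor $\gamma\in(0,1)$ and a tax $\lambda\in\mathbb{R}$, define \[ V_\gamma^\lambda(\mu,\sigma)=\sup_{\tau\ge 1}\mathbb{E}\Big[\sum_{t=0}^{\tau}\gamma^t(\theta-\lambda)\Big], \] where the supremum is over stopping times $\tau\ge 1$ (possibly infinite) with respect to the filtration $(\mathcal{H}_t)_{t\ge0}$, and the expectation is under the model with prior $N(\mu,\sigma^2)$. The Gittins index is $\lambda_\gamma(\mu,\sigma^2)=\sup\{\lambda\in\mathbb{R} : V_\gamma^\lambda(\mu,\sigma)\ge 0\}$. Here $\mu=0$, $\sigma^2=1$. *)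

theory Defs
  imports "HOL-Probability.Probability"
begin

text \<open>Underlying probability space: an i.i.d. sequence Z 0, Z 1, ... of standard normals.
  The arm quality is theta = mu + sigma * Z 0 (so theta ~ N(mu, sigma^2)), and the rewards are
  R t = theta + sigma_W * Z (t+1), so that conditionally on theta they are i.i.d. N(theta, sigma_W^2).\<close>

definition bandit_space :: "(nat \<Rightarrow> real) measure" where
  "bandit_space = PiM UNIV (\<lambda>_. density lborel std_normal_density)"

definition arm_quality :: "real \<Rightarrow> real \<Rightarrow> (nat \<Rightarrow> real) \<Rightarrow> real" where
  "arm_quality \<mu> \<sigma> \<omega> = \<mu> + \<sigma> * \<omega> 0"

definition reward :: "real \<Rightarrow> real \<Rightarrow> real \<Rightarrow> nat \<Rightarrow> (nat \<Rightarrow> real) \<Rightarrow> real" where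
  "reward \<mu> \<sigma> \<sigma>W t \<omega> = arm_quality \<mu> \<sigma> \<omega> + \<sigma>W * \<omega> (Suc t)"

definition history :: "real \<Rightarrow> real \<Rightarrow> real \<Rightarrow> nat \<Rightarrow> (nat \<Rightarrow> real) measure" where
  "history \<mu> \<sigma> \<sigma>W t = vimage_algebra (space bandit_space)
      (\<lambda>\<omega>. restrict (\<lambda>i. reward \<mu> \<sigma> \<sigma>W i \<omega>) {..<t}) (PiM {..<t} (\<lambda>_. borel))"

definition admissible_stopping_time ::
  "real \<Rightarrow> real \<Rightarrow> real \<Rightarrow> ((nat \<Rightarrow> real) \<Rightarrow> enat) \<Rightarrow> bool" where
  "admissible_stopping_time \<mu> \<sigma> \<sigma>W \<tau> \<longleftrightarrow>
     (\<forall>\<omega>\<in>space bandit_space. 1 \<le> \<tau> \<omega>) \<and>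
     (\<forall>t::nat. {\<omega>\<in>space bandit_space. \<tau> \<omega> \<le> enat t} \<in> sets (history \<mu> \<sigma> \<sigma>W t))"

definition stopped_payoff ::
  "real \<Rightarrow> real \<Rightarrow> real \<Rightarrow> real \<Rightarrow> ((nat \<Rightarrow> real) \<Rightarrow> enat) \<Rightarrow> (nat \<Rightarrow> real) \<Rightarrow> real" where
  "stopped_payoff \<mu> \<sigma> \<gamma> tax \<tau> \<omega> =
     (\<Sum>t. if enat t \<le> \<tau> \<omega> then \<gamma> ^ t * (arm_quality \<mu> \<sigma> \<omega> - tax) else 0)"

definition gittins_value :: "real \<Rightarrow> real \<Rightarrow> real \<Rightarrow> real \<Rightarrow> real \<Rightarrow> real" where
  "gittins_value \<sigma>W \<gamma> tax \<mu> \<sigma> =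
     Sup ((\<lambda>\<tau>. integral\<^sup>L bandit_space (stopped_payoff \<mu> \<sigma> \<gamma> tax \<tau>)) `
          {\<tau>. admissible_stopping_time \<mu> \<sigma> \<sigma>W \<tau>})"

text \<open>Gittins index lambda_gamma(mu, sigma^2); sigma is the prior standard deviation.\<close>

definition gittins_index :: "real \<Rightarrow> real \<Rightarrow> real \<Rightarrow> real \<Rightarrow> real" where
  "gittins_index \<sigma>W \<gamma> \<mu> \<sigma> = Sup {tax. gittins_value \<sigma>W \<gamma> tax \<mu> \<sigma> \<ge> 0}"

end

theory Submission
  imports Defs
begin

text \<open>Write the discounted payoff as \<open>W \<omega> * (\<theta> - \<lambda>)\<close> with the random discount weight
  \<open>1 \<le> W \<le> 1/(1-\<gamma>)\<close>. Since \<open>s x \<le> exp (s x)\<close>, we get pointwise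
  \<open>W (\<theta> - \<lambda>) \<le> (\<theta> - \<lambda>) + \<gamma>/(1-\<gamma>) exp (s (\<theta> - \<lambda>)) / s\<close> for every \<open>s > 0\<close>, whatever the
  stopping rule. Taking expectations under \<open>\<theta> \<sim> N(0,1)\<close> with the moment generating function
  and choosing \<open>s = \<lambda>\<close> shows that every stopping rule has negative value once
  \<open>\<lambda>\<^sup>2 > 2 ln (1/(1-\<gamma>))\<close>; as \<open>ln (1/(1-\<gamma>)) \<ge> \<gamma>\<close>, this works for every \<open>\<gamma> \<in> (0,1)\<close>, so the
  \<open>o(1)\<close> term can be taken to be \<open>0\<close>.\<close>

lemma measurable_bandit_component [measurable]:
  "(\<lambda>\<omega>. \<omega> i) \<in> borel_measurable bandit_space"
proof -
  have "(\<lambda>\<omega>. \<omega> i) \<in> measurable bandit_space std_normal_distribution"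
    unfolding bandit_space_def by (rule measurable_component_singleton) simp
  then show ?thesis
    using measurable_cong_sets[OF refl, of "std_normal_distribution" borel] by simp
qed

lemma prob_space_std_normal: "prob_space std_normal_distribution"
  using prob_space_normal_density[of 1 0] by simp

lemma prob_space_bandit_space: "prob_space bandit_space"
  unfolding bandit_space_def using prob_space_std_normal by (intro prob_space_PiM) auto

lemma
  assumes [measurable]: "g \<in> borel_measurable borel"
  shows integrable_bandit_component_iff:
      "integrable bandit_space (\<lambda>\<omega>. g (\<omega> i)) \<longleftrightarrow>
         integrable lborel (\<lambda>x. std_normal_density x * g x)"
    and integral_bandit_component:
      "integral\<^sup>L bandit_space (\<lambda>\<omega>. g (\<omega> i)) = integral\<^sup>L lborel (\<lambda>x. std_normal_density x * g x)"
proof -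
  let ?N = "std_normal_distribution"
  have m: "(\<lambda>\<omega>. \<omega> i) \<in> measurable bandit_space ?N"
    unfolding bandit_space_def by (rule measurable_component_singleton) simp
  have distr: "distr bandit_space ?N (\<lambda>\<omega>. \<omega> i) = ?N"
    unfolding bandit_space_def by (rule distr_PiM_component) (auto intro: prob_space_std_normal)
  have "integrable bandit_space (\<lambda>\<omega>. g (\<omega> i)) \<longleftrightarrow>
          integrable (distr bandit_space ?N (\<lambda>\<omega>. \<omega> i)) g"
    using m by (subst integrable_distr_eq) auto
  then show "integrable bandit_space (\<lambda>\<omega>. g (\<omega> i)) \<longleftrightarrow>
               integrable lborel (\<lambda>x. std_normal_density x * g x)"
    by (simp add: distr integrable_density)
  have "integral\<^sup>L bandit_space (\<lambda>\<omega>. g (\<omega> i)) = integral\<^sup>L (distr bandit_space ?N (\<lambda>\<omega>. \<omega> i)) g"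
    using m by (subst integral_distr) auto
  then show "integral\<^sup>L bandit_space (\<lambda>\<omega>. g (\<omega> i)) = integral\<^sup>L lborel (\<lambda>x. std_normal_density x * g x)"
    by (simp add: distr integral_density)
qed

lemma std_normal_density_mult_exp:
  "std_normal_density x * exp (s * x) = exp (s\<^sup>2 / 2) * normal_density s 1 x"
  by (simp add: normal_density_def std_normal_density_def exp_add[symmetric] power2_eq_square
      algebra_simps; simp add: field_simps)

lemma
  shows integrable_exp_bandit_component: "integrable bandit_space (\<lambda>\<omega>. exp (s * \<omega> i))"
    and integral_exp_bandit_component:
      "integral\<^sup>L bandit_space (\<lambda>\<omega>. exp (s * \<omega> i)) = exp (s\<^sup>2 / 2)"
  by (subst integrable_bandit_component_iff integral_bandit_component;
      simp add: std_normal_density_mult_exp)+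

lemma
  shows integrable_bandit_component: "integrable bandit_space (\<lambda>\<omega>. \<omega> i)"
    and integral_bandit_component_eq_0: "integral\<^sup>L bandit_space (\<lambda>\<omega>. \<omega> i) = 0"
    and integrable_abs_bandit_component: "integrable bandit_space (\<lambda>\<omega>. \<bar>\<omega> i\<bar>)"
  using integrable_bandit_component_iff[of "\<lambda>x. x"] integral_bandit_component[of "\<lambda>x. x"]
    integrable_bandit_component_iff[of "\<lambda>x. \<bar>x\<bar>"] integrable_std_normal_moment[of 1]
    integral_std_normal_moment_odd[of 0] integrable_std_normal_moment_abs[of 1]
  by auto

lemma sets_history_subset: "sets (history \<mu> \<sigma> \<sigma>W t) \<subseteq> sets bandit_space"
  unfolding history_def
  by (rule sets_image_in_sets) (auto simp: reward_def arm_quality_def intro!: measurable_restrict)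

lemma admissible_stopping_time_pred_ge:
  assumes "admissible_stopping_time \<mu> \<sigma> \<sigma>W \<tau>"
  shows "Measurable.pred bandit_space (\<lambda>\<omega>. enat t \<le> \<tau> \<omega>)"
proof (cases t)
  case 0
  then show ?thesis by (simp add: zero_enat_def[symmetric])
next
  case (Suc k)
  have "{\<omega>\<in>space bandit_space. \<tau> \<omega> \<le> enat k} \<in> sets bandit_space"
    using assms sets_history_subset unfolding admissible_stopping_time_def by blast
  then have "Measurable.pred bandit_space (\<lambda>\<omega>. \<not> \<tau> \<omega> \<le> enat k)"
    unfolding pred_def by (simp add: set_diff_eq[symmetric] sets.compl_sets)
  then show ?thesis
    using Suc by (simp add: Suc_ile_eq not_le)
qed

lemma admissible_stopping_time_one: "admissible_stopping_time \<mu> \<sigma> \<sigma>W (\<lambda>_. 1)"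
  unfolding admissible_stopping_time_def
proof (intro conjI allI ballI)
  fix t :: nat
  have "{\<omega> \<in> space bandit_space. (1::enat) \<le> enat t} = (if t = 0 then {} else space (history \<mu> \<sigma> \<sigma>W t))"
    by (simp add: history_def one_enat_def)
  then show "{\<omega> \<in> space bandit_space. (1::enat) \<le> enat t} \<in> sets (history \<mu> \<sigma> \<sigma>W t)"
    by simp
qed simp

definition discount_weight :: "real \<Rightarrow> ((nat \<Rightarrow> real) \<Rightarrow> enat) \<Rightarrow> (nat \<Rightarrow> real) \<Rightarrow> real" where
  "discount_weight \<gamma> \<tau> \<omega> = (\<Sum>t. if enat t \<le> \<tau> \<omega> then \<gamma> ^ t else 0)"

lemma summable_discount_weight:
  fixes \<gamma> :: real
  assumes "0 < \<gamma>" "\<gamma> < 1"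
  shows "summable (\<lambda>t. if enat t \<le> \<tau> \<omega> then \<gamma> ^ t else 0)"
  by (rule summable_comparison_test[OF _ summable_geometric[of \<gamma>]]) (use assms in auto)

lemma discount_weight_bounds:
  assumes "0 < \<gamma>" "\<gamma> < 1"
  shows "1 \<le> discount_weight \<gamma> \<tau> \<omega>" "discount_weight \<gamma> \<tau> \<omega> \<le> 1 / (1 - \<gamma>)"
proof -
  have "(\<Sum>t\<in>{0}. if enat t \<le> \<tau> \<omega> then \<gamma> ^ t else 0) \<le> discount_weight \<gamma> \<tau> \<omega>"
    unfolding discount_weight_def using assms by (intro sum_le_suminf summable_discount_weight) auto
  then show "1 \<le> discount_weight \<gamma> \<tau> \<omega>"
    by (simp add: zero_enat_def[symmetric])
  have "discount_weight \<gamma> \<tau> \<omega> \<le> (\<Sum>t. \<gamma> ^ t)"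
    unfolding discount_weight_def using assms
    by (intro suminf_le summable_discount_weight summable_geometric) auto
  also have "\<dots> = 1 / (1 - \<gamma>)"
    using assms by (simp add: suminf_geometric)
  finally show "discount_weight \<gamma> \<tau> \<omega> \<le> 1 / (1 - \<gamma>)" .
qed

lemma discount_weight_one:
  "discount_weight \<gamma> (\<lambda>_. 1) \<omega> = 1 + \<gamma>"
proof -
  have "discount_weight \<gamma> (\<lambda>_. 1) \<omega> = (\<Sum>t\<in>{0, 1}. if enat t \<le> 1 then \<gamma> ^ t else 0)"
    unfolding discount_weight_def by (rule suminf_finite) (auto simp: one_enat_def)
  then show ?thesis
    by (simp add: one_enat_def)
qed

lemma stopped_payoff_eq_discount_weight:
  assumes "0 < \<gamma>" "\<gamma> < 1"
  shows "stopped_payoff \<mu> \<sigma> \<gamma> tax \<tau> \<omega> = discount_weight \<gamma> \<tau> \<omega> * (arm_quality \<mu> \<sigma> \<omega> - tax)"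
  unfolding stopped_payoff_def discount_weight_def
  by (subst suminf_mult2[OF summable_discount_weight[OF assms]]) (auto intro!: suminf_cong)

lemma stopped_payoff_std_prior:
  assumes "0 < \<gamma>" "\<gamma> < 1"
  shows "stopped_payoff 0 1 \<gamma> tax \<tau> = (\<lambda>\<omega>. discount_weight \<gamma> \<tau> \<omega> * (\<omega> 0 - tax))"
  by (simp add: fun_eq_iff stopped_payoff_eq_discount_weight[OF assms] arm_quality_def)

lemma discount_weight_measurable:
  assumes "admissible_stopping_time \<mu> \<sigma> \<sigma>W \<tau>"
  shows "discount_weight \<gamma> \<tau> \<in> borel_measurable bandit_space"
  unfolding discount_weight_def[abs_def]
  using admissible_stopping_time_pred_ge[OF assms] by measurable

lemma weighted_le_exp_bound:
  fixes c x s k :: real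
  assumes "0 < s" "0 \<le> k" "1 \<le> c" "c \<le> 1 + k"
  shows "c * x \<le> x + k * (exp (s * x) / s)"
proof (cases "x \<le> 0")
  case True
  then have "(c - 1) * x \<le> 0"
    using assms by (simp add: mult_nonneg_nonpos)
  moreover have "0 \<le> k * (exp (s * x) / s)"
    using assms by simp
  ultimately show ?thesis by (simp add: algebra_simps)
next
  case False
  have "s * x \<le> exp (s * x)"
    using exp_ge_add_one_self[of "s * x"] by linarith
  then have "x \<le> exp (s * x) / s"
    using assms by (simp add: field_simps)
  then have "(c - 1) * x \<le> k * (exp (s * x) / s)"
    using assms False by (intro mult_mono) auto
  then show ?thesis by (simp add: algebra_simps)
qed

lemma integrable_stopped_payoff:
  assumes adm: "admissible_stopping_time \<mu> \<sigma> \<sigma>W \<tau>" and \<gamma>: "0 < \<gamma>" "\<gamma> < 1"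
  shows "integrable bandit_space (stopped_payoff 0 1 \<gamma> tax \<tau>)"
  unfolding stopped_payoff_std_prior[OF \<gamma>]
proof (rule Bochner_Integration.integrable_bound)
  interpret prob_space bandit_space
    by (rule prob_space_bandit_space)
  show "integrable bandit_space (\<lambda>\<omega>. (\<bar>\<omega> 0\<bar> + \<bar>tax\<bar>) / (1 - \<gamma>))"
    using integrable_abs_bandit_component[of 0] by (intro integrable_divide integrable_add) auto
  show "(\<lambda>\<omega>. discount_weight \<gamma> \<tau> \<omega> * (\<omega> 0 - tax)) \<in> borel_measurable bandit_space"
    using discount_weight_measurable[OF adm] by simp
  show "AE \<omega> in bandit_space.
          norm (discount_weight \<gamma> \<tau> \<omega> * (\<omega> 0 - tax)) \<le> norm ((\<bar>\<omega> 0\<bar> + \<bar>tax\<bar>) / (1 - \<gamma>))"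
  proof (intro AE_I2)
    fix \<omega>
    have "norm (discount_weight \<gamma> \<tau> \<omega> * (\<omega> 0 - tax)) = discount_weight \<gamma> \<tau> \<omega> * \<bar>\<omega> 0 - tax\<bar>"
      using discount_weight_bounds(1)[OF \<gamma>, of \<tau> \<omega>] by (simp add: abs_mult)
    also have "\<dots> \<le> 1 / (1 - \<gamma>) * (\<bar>\<omega> 0\<bar> + \<bar>tax\<bar>)"
      using discount_weight_bounds[OF \<gamma>] \<gamma> by (intro mult_mono) auto
    finally show "norm (discount_weight \<gamma> \<tau> \<omega> * (\<omega> 0 - tax)) \<le> norm ((\<bar>\<omega> 0\<bar> + \<bar>tax\<bar>) / (1 - \<gamma>))"
      using \<gamma> by simp
  qed
qed

lemma integral_stopped_payoff_le:
  assumes adm: "admissible_stopping_time \<mu> \<sigma> \<sigma>W \<tau>" and \<gamma>: "0 < \<gamma>" "\<gamma> < 1" and "0 < s"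
  shows "integral\<^sup>L bandit_space (stopped_payoff 0 1 \<gamma> tax \<tau>)
           \<le> - tax + \<gamma> / (1 - \<gamma>) * (exp (s\<^sup>2 / 2 - s * tax) / s)"
proof -
  interpret prob_space bandit_space
    by (rule prob_space_bandit_space)
  define k where "k = \<gamma> / (1 - \<gamma>)"
  define R where "R \<omega> = (\<omega> 0 - tax) + k * (exp (- s * tax) / s) * exp (s * \<omega> 0)" for \<omega> :: "nat \<Rightarrow> real"
  have "stopped_payoff 0 1 \<gamma> tax \<tau> \<omega> \<le> R \<omega>" for \<omega>
  proof -
    have weight: "1 \<le> discount_weight \<gamma> \<tau> \<omega>" "discount_weight \<gamma> \<tau> \<omega> \<le> 1 + k"
      using discount_weight_bounds[OF \<gamma>] \<gamma> by (auto simp: k_def field_simps)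
    have "stopped_payoff 0 1 \<gamma> tax \<tau> \<omega> = discount_weight \<gamma> \<tau> \<omega> * (\<omega> 0 - tax)"
      by (simp add: stopped_payoff_std_prior[OF \<gamma>])
    also have "\<dots> \<le> (\<omega> 0 - tax) + k * (exp (s * (\<omega> 0 - tax)) / s)"
      using weight \<gamma> \<open>0 < s\<close> by (intro weighted_le_exp_bound) (auto simp: k_def)
    also have "exp (s * (\<omega> 0 - tax)) = exp (- s * tax) * exp (s * \<omega> 0)"
      by (simp add: exp_add[symmetric] algebra_simps)
    finally show ?thesis
      unfolding R_def by simp
  qed
  then have "integral\<^sup>L bandit_space (stopped_payoff 0 1 \<gamma> tax \<tau>) \<le> integral\<^sup>L bandit_space R"
    unfolding R_def
    using integrable_stopped_payoff[OF adm \<gamma>] integrable_bandit_component integrable_exp_bandit_component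
    by (intro integral_mono) auto
  also have "integral\<^sup>L bandit_space R = - tax + k * (exp (- s * tax) / s) * exp (s\<^sup>2 / 2)"
    unfolding R_def
    using integrable_bandit_component integrable_exp_bandit_component
    by (simp add: integral_bandit_component_eq_0 integral_exp_bandit_component prob_space)
  also have "\<dots> = - tax + \<gamma> / (1 - \<gamma>) * (exp (s\<^sup>2 / 2 - s * tax) / s)"
    unfolding k_def by (simp add: mult_exp_exp algebra_simps)
  finally show ?thesis .
qed

lemma gittins_value_le:
  assumes "0 < \<gamma>" "\<gamma> < 1" "0 < s"
  shows "gittins_value \<sigma>W \<gamma> tax 0 1 \<le> - tax + \<gamma> / (1 - \<gamma>) * (exp (s\<^sup>2 / 2 - s * tax) / s)"
  unfolding gittins_value_def
  using admissible_stopping_time_one integral_stopped_payoff_le[OF _ assms]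
  by (intro cSup_least) auto

lemma gittins_value_zero_tax_nonneg:
  assumes \<gamma>: "0 < \<gamma>" "\<gamma> < 1"
  shows "0 \<le> gittins_value \<sigma>W \<gamma> 0 0 1"
  unfolding gittins_value_def
proof (rule cSup_upper2)
  show "integral\<^sup>L bandit_space (stopped_payoff 0 1 \<gamma> 0 (\<lambda>_. 1))
          \<in> (\<lambda>\<tau>. integral\<^sup>L bandit_space (stopped_payoff 0 1 \<gamma> 0 \<tau>)) ` {\<tau>. admissible_stopping_time 0 1 \<sigma>W \<tau>}"
    using admissible_stopping_time_one by blast
  show "bdd_above ((\<lambda>\<tau>. integral\<^sup>L bandit_space (stopped_payoff 0 1 \<gamma> 0 \<tau>)) `
          {\<tau>. admissible_stopping_time 0 1 \<sigma>W \<tau>})"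
    using integral_stopped_payoff_le[OF _ \<gamma>, where s = 1 and tax = 0] by (intro bdd_aboveI) auto
  have "stopped_payoff 0 1 \<gamma> 0 (\<lambda>_. 1) = (\<lambda>\<omega>. (1 + \<gamma>) * \<omega> 0)"
    by (simp add: stopped_payoff_std_prior[OF \<gamma>] discount_weight_one)
  then show "0 \<le> integral\<^sup>L bandit_space (stopped_payoff 0 1 \<gamma> 0 (\<lambda>_. 1))"
    by (simp add: integral_bandit_component_eq_0)
qed

lemma gittins_value_neg:
  assumes \<gamma>: "0 < \<gamma>" "\<gamma> < 1" and tax: "sqrt (2 * ln (1 / (1 - \<gamma>))) < tax"
  shows "gittins_value \<sigma>W \<gamma> tax 0 1 < 0"
proof -
  define L where "L = ln (1 / (1 - \<gamma>))"
  have L_eq: "L = - ln (1 - \<gamma>)"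
    unfolding L_def using \<gamma> by (simp add: ln_div)
  have "\<gamma> \<le> L"
    using ln_le_minus_one[of "1 - \<gamma>"] \<gamma> L_eq by simp
  then have "0 \<le> sqrt (2 * L)"
    using \<gamma> by simp
  with tax have "0 < tax"
    unfolding L_def by linarith
  then have "2 * L < tax\<^sup>2"
    using tax real_sqrt_less_iff[of "2 * L" "tax\<^sup>2"] unfolding L_def by simp
  then have "exp (- tax\<^sup>2 / 2) < exp (- L)"
    by simp
  also have "exp (- L) = 1 - \<gamma>"
    using L_eq \<gamma> by simp
  finally have "exp (- tax\<^sup>2 / 2) / (1 - \<gamma>) < 1"
    using \<gamma> by simp
  have "\<gamma> / (1 - \<gamma>) * (exp (- tax\<^sup>2 / 2) / tax) = \<gamma> * (exp (- tax\<^sup>2 / 2) / (1 - \<gamma>)) / tax"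
    by simp
  also have "\<dots> < \<gamma> * 1 / tax"
    using \<open>exp (- tax\<^sup>2 / 2) / (1 - \<gamma>) < 1\<close> \<gamma> \<open>0 < tax\<close>
    by (intro divide_strict_right_mono mult_strict_left_mono) auto
  also have "\<gamma> * 1 / tax < tax"
    using \<open>2 * L < tax\<^sup>2\<close> \<open>\<gamma> \<le> L\<close> \<gamma> \<open>0 < tax\<close> by (simp add: field_simps power2_eq_square)
  finally show ?thesis
    using gittins_value_le[OF \<gamma> \<open>0 < tax\<close>, of \<sigma>W tax] by (simp add: power2_eq_square)
qed

lemma gittins_index_le:
  assumes \<gamma>: "0 < \<gamma>" "\<gamma> < 1"
  shows "gittins_index \<sigma>W \<gamma> 0 1 \<le> sqrt (2 * ln (1 / (1 - \<gamma>)))"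
  unfolding gittins_index_def
proof (rule cSup_least)
  show "{tax. 0 \<le> gittins_value \<sigma>W \<gamma> tax 0 1} \<noteq> {}"
    using gittins_value_zero_tax_nonneg[OF \<gamma>] by blast
next
  fix tax
  assume "tax \<in> {tax. 0 \<le> gittins_value \<sigma>W \<gamma> tax 0 1}"
  then show "tax \<le> sqrt (2 * ln (1 / (1 - \<gamma>)))"
    using gittins_value_neg[OF \<gamma>, of tax \<sigma>W] by fastforce
qed

theorem lemma4:
  fixes \<sigma>W :: real
  assumes "\<sigma>W > 0"
  shows "\<exists>e :: real \<Rightarrow> real. (e \<longlongrightarrow> 0) (at_left 1) \<and>
           (\<forall>\<^sub>F \<gamma> in at_left 1.
              gittins_index \<sigma>W \<gamma> 0 1 \<le> sqrt (2 * ln (1 / (1 - \<gamma>))) + e \<gamma>)"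
proof (intro exI[of _ "\<lambda>_. 0"] conjI)
  show "((\<lambda>_. 0::real) \<longlongrightarrow> 0) (at_left 1)" by simp
  have "\<forall>\<^sub>F \<gamma> in at_left 1. \<gamma> \<in> {0<..<(1::real)}"
    by (rule eventually_at_left_real) simp
  then show "\<forall>\<^sub>F \<gamma> in at_left 1. gittins_index \<sigma>W \<gamma> 0 1 \<le> sqrt (2 * ln (1 / (1 - \<gamma>))) + 0"
    by eventually_elim (simp add: gittins_index_le)
qed

end
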